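(* Let $G$ be an arbitrary graph and let the buyers' values be i.i.d. uniform on $[0,1]$. Then $$\inf_{\mathbf{T}\in\mathcal{N}_{(1/2)\cdot\mathbf{1}}}\mathcal{R}\big(\tfrac12\cdot\mathbf{1},\mathbf{T}\big)\ \ge\ \frac{e}{4}\cdot\sup_{p>0}\ \inf_{\mathbf{T}\in\mathcal{N}_{p\cdot\mathbf{1}}}\mathcal{R}(p\cdot\mathbf{1},\mathbf{T}).$$
   Context: Public-goods pricing game: $n$ buyers are the vertices of an undirected graph $G=([n],E)$; $N(i)=\{j:(i,j)\in E\}$ (so $i\notin N(i)$). Values i.i.d. uniform on $[0,1]$, $F(x)=\min\{1,x\}$ for $x\ge0$, $F(\infty)=1$. An equilibrium for price vector $\mathbf{p}$ is $\mathbf{T}\in[0,\infty]^n$ (buyer $i$ purchases iff $v_i\ge T_i$) with $T_i=p_i/\prod_{j\in N(i)}F(T_j)$ for all $i$ (convention $c/0=\infty$); $\mathcal{N}_{\mathbf{p}}$ is the set of equilibria; $\mathcal{R}(\mathbf{p},\mathbf{T})=\sum_ip_i(1-F(T_i))$; $p\cdot\mathbf{1}$ is the uniform price vector. *)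

theory Defs
  imports "HOL-Analysis.Analysis"
begin

text \<open>Graph on vertex set [n] = {0..<n} given by an edge relation E
  (assumed symmetric and irreflexive in the theorem).\<close>

definition nbrs :: "nat \<Rightarrow> (nat \<Rightarrow> nat \<Rightarrow> bool) \<Rightarrow> nat \<Rightarrow> nat set" where
  "nbrs n E i = {j. j < n \<and> E i j}"

text \<open>Uniform CDF on [0,infinity]: F(x) = min 1 x, F(infinity) = 1.\<close>
definition Funif :: "ereal \<Rightarrow> real" where
  "Funif x = (if x = \<infinity> then 1 else min 1 (real_of_ereal x))"

text \<open>Equilibria for price vector p: thresholds T in [0,infinity]^n with
  T_i = p_i / prod_{j in N(i)} F(T_j), convention c/0 = infinity.
  Coordinates outside [n] are fixed to 0 (irrelevant).\<close>
definition equilibria :: "nat \<Rightarrow> (nat \<Rightarrow> nat \<Rightarrow> bool) \<Rightarrow> (nat \<Rightarrow> real) \<Rightarrow> (nat \<Rightarrow> ereal) set" where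
  "equilibria n E p = {T. (\<forall>i. i \<ge> n \<longrightarrow> T i = 0) \<and>
     (\<forall>i<n. 0 \<le> T i \<and>
        T i = (let d = (\<Prod>j\<in>nbrs n E i. Funif (T j)) in
               if d = 0 then \<infinity> else ereal (p i / d)))}"

definition revenue :: "nat \<Rightarrow> (nat \<Rightarrow> real) \<Rightarrow> (nat \<Rightarrow> ereal) \<Rightarrow> real" where
  "revenue n p T = (\<Sum>i<n. p i * (1 - Funif (T i)))"

text \<open>Worst-case revenue over equilibria (as extended real, Inf {} = infinity).\<close>
definition worst_rev :: "nat \<Rightarrow> (nat \<Rightarrow> nat \<Rightarrow> bool) \<Rightarrow> (nat \<Rightarrow> real) \<Rightarrow> ereal" where
  "worst_rev n E p = (INF T\<in>equilibria n E p. ereal (revenue n p T))"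

end

theory Submission imports Defs begin

text \<open>Let \<open>T\<close> be an equilibrium at price \<open>1/2\<close> and \<open>x\<^sub>i = F(T\<^sub>i)\<close>; then \<open>x\<^sub>i \<ge> 1/2\<close>.
  For \<open>p < 1\<close> write \<open>p = (1/2)\<^sup>a\<close>: raising every purchase probability to the power
  \<open>a\<close> turns \<open>T\<close> into an equilibrium at price \<open>p\<close>, because the equilibrium condition
  \<open>F(T\<^sub>i) = min 1 (p / \<Prod>\<^sub>j F(T\<^sub>j))\<close> is invariant under this power map.  Its revenue
  \<open>\<Sum> p (1 - x\<^sub>i\<^sup>a)\<close> is termwise at most \<open>4/e\<close> times \<open>\<Sum> (1 - x\<^sub>i)/2\<close>, by
  \<open>1 - x\<^sup>a \<le> a (-ln x) \<le> 2 a ln 2 (1 - x)\<close> and \<open>p ln (1/p) \<le> 1/e\<close>.  For \<open>p \<ge> 1\<close>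
  nobody buying is an equilibrium of revenue \<open>0\<close>.\<close>

lemma minus_ln_le_chord:
  fixes c x :: real
  assumes "0 < c" "c \<le> x" "x \<le> 1"
  shows "- ln x \<le> - ln c / (1 - c) * (1 - x)"
proof (cases "c = 1")
  case False
  have "concave_on {c..1} ln"
    using ln_concave unfolding concave_on_def by (rule convex_on_subset) (use assms in auto)
  then have "ln x \<ge> (ln 1 - ln c) / (1 - c) * (x - c) + ln c"
    using concave_onD_Icc' assms by fastforce
  moreover have "(ln 1 - ln c) / (1 - c) * (x - c) + ln c = ln c / (1 - c) * (1 - x)"
    using False by (simp add: field_simps)
  ultimately show ?thesis by simp
qed (use assms in simp)

lemma mult_ln_inverse_le: "0 < p \<Longrightarrow> p * ln (1 / p) \<le> exp (- 1 :: real)"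
proof -
  assume p: "0 < p"
  have "ln (1 / p) - 1 = ln ((1 / p) / exp 1)"
    using p by (subst ln_div) auto
  also have "\<dots> \<le> (1 / p) / exp 1 - 1"
    using p by (intro ln_le_minus_one) simp
  finally have "p * ln (1 / p) \<le> p * ((1 / p) / exp 1)"
    using p by (intro mult_left_mono) auto
  also have "\<dots> = exp (- 1)"
    using p by (simp add: exp_minus field_simps)
  finally show ?thesis .
qed

lemma half_powr_log_inverse: "0 < p \<Longrightarrow> (1/2) powr log 2 (1 / p) = (p :: real)"
proof -
  assume "0 < p"
  have "(1/2) powr log 2 (1 / p) = 1 / 2 powr log 2 (1 / p)"
    by (simp only: powr_divide powr_one_eq_one)
  also have "\<dots> = p"
    using \<open>0 < p\<close> by (subst powr_log_cancel) auto
  finally show ?thesis .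
qed

lemma powr_log_loss_le:
  fixes p x :: real
  assumes p: "0 < p" "p < 1" and x: "1/2 \<le> x" "x \<le> 1"
  shows "p * (1 - x powr log 2 (1 / p)) \<le> 4 / exp 1 * (1/2 * (1 - x))"
proof -
  define a where "a = log 2 (1 / p)"
  have "a \<ge> 0" using p by (simp add: a_def)
  have "x powr a = exp (a * ln x)"
    using x by (simp add: powr_def)
  then have "1 - x powr a \<le> a * (- ln x)"
    using exp_ge_add_one_self[of "a * ln x"] by linarith
  also have "\<dots> \<le> a * (2 * ln 2 * (1 - x))"
    using minus_ln_le_chord[of "1/2" x] x \<open>a \<ge> 0\<close> by (intro mult_left_mono) (simp_all add: ln_div)
  also have "\<dots> = 2 * (1 - x) * ln (1 / p)"
    by (simp add: a_def log_def)
  finally have "p * (1 - x powr a) \<le> 2 * (1 - x) * (p * ln (1 / p))"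
    using p by (simp add: mult_left_mono)
  also have "\<dots> \<le> 2 * (1 - x) * exp (- 1)"
    using mult_ln_inverse_le[OF p(1)] x by (intro mult_left_mono) simp_all
  also have "\<dots> = 4 / exp 1 * (1/2 * (1 - x))"
    by (simp add: exp_minus field_simps)
  finally show ?thesis by (simp add: a_def)
qed

lemma Funif_nonneg: "0 \<le> t \<Longrightarrow> 0 \<le> Funif t"
  by (auto simp: Funif_def real_of_ereal_pos)

lemma Funif_le_1: "Funif t \<le> 1"
  by (simp add: Funif_def)

lemma Funif_ereal [simp]: "Funif (ereal r) = min 1 r"
  by (simp add: Funif_def)

lemma equilibriaD:
  assumes "T \<in> equilibria n E p" "i < n"
  shows "0 \<le> T i"
    and "T i = (let d = \<Prod>j\<in>nbrs n E i. Funif (T j) in if d = 0 then \<infinity> else ereal (p i / d))"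
  using assms unfolding equilibria_def by blast+

lemma equilibriaI:
  assumes "\<And>i. n \<le> i \<Longrightarrow> T i = 0"
    and "\<And>i. i < n \<Longrightarrow> 0 \<le> p i"
    and "\<And>i. i < n \<Longrightarrow> 0 < (\<Prod>j\<in>nbrs n E i. Funif (T j))"
    and "\<And>i. i < n \<Longrightarrow> T i = ereal (p i / (\<Prod>j\<in>nbrs n E i. Funif (T j)))"
  shows "T \<in> equilibria n E p"
proof -
  have "0 \<le> T i" if "i < n" for i
    using assms(2-4)[OF that] by simp
  moreover have "T i = (let d = \<Prod>j\<in>nbrs n E i. Funif (T j) in
                   if d = 0 then \<infinity> else ereal (p i / d))" if "i < n" for i
    using assms(3,4)[OF that] by (simp add: Let_def)
  ultimately show ?thesis
    unfolding equilibria_def using assms(1) by simp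
qed

lemma equilibrium_neighbour_prod_bounds:
  assumes "T \<in> equilibria n E p"
  shows "0 \<le> (\<Prod>j\<in>nbrs n E i. Funif (T j))" "(\<Prod>j\<in>nbrs n E i. Funif (T j)) \<le> 1"
  using equilibriaD(1)[OF assms] Funif_nonneg Funif_le_1
  by (auto simp: nbrs_def intro!: prod_nonneg prod_le_1)

lemma equilibrium_Funif_ge:
  assumes T: "T \<in> equilibria n E p" and i: "i < n" and "0 \<le> p i"
  shows "min 1 (p i) \<le> Funif (T i)"
proof -
  define d where "d = (\<Prod>j\<in>nbrs n E i. Funif (T j))"
  have "0 \<le> d" "d \<le> 1"
    using equilibrium_neighbour_prod_bounds[OF T] by (simp_all add: d_def)
  show ?thesis
  proof (cases "d = 0")
    case True
    then show ?thesis
      using equilibriaD(2)[OF T i] by (simp add: d_def Funif_def)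
  next
    case False
    then have "p i \<le> p i / d"
      using \<open>0 \<le> d\<close> \<open>d \<le> 1\<close> \<open>0 \<le> p i\<close> by (simp add: le_divide_eq mult_left_le)
    then show ?thesis
      using False equilibriaD(2)[OF T i] by (simp add: d_def)
  qed
qed

lemma equilibrium_Funif_eq:
  assumes T: "T \<in> equilibria n E p" and i: "i < n"
    and pos: "0 < (\<Prod>j\<in>nbrs n E i. Funif (T j))"
  shows "Funif (T i) = min 1 (p i / (\<Prod>j\<in>nbrs n E i. Funif (T j)))"
  using equilibriaD(2)[OF T i] pos by simp

lemma min_1_powr: "0 \<le> y \<Longrightarrow> 0 < a \<Longrightarrow> min 1 y powr a = min 1 (y powr a)"
  for y a :: real
  using powr_le1[of a y] ge_one_powr_ge_zero[of y a] by (auto simp: min_def)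

lemma equilibrium_powr:
  assumes T: "T \<in> equilibria n E p" and p: "\<And>i. 0 \<le> p i"
    and pos: "\<And>j. j < n \<Longrightarrow> 0 < Funif (T j)" and a: "0 < a"
  obtains T' where "T' \<in> equilibria n E (\<lambda>i. p i powr a)"
    and "\<And>i. i < n \<Longrightarrow> Funif (T' i) = Funif (T i) powr a"
proof -
  define d where "d i = (\<Prod>j\<in>nbrs n E i. Funif (T j))" for i
  define T' where "T' i = (if i < n then ereal ((p i / d i) powr a) else 0)" for i
  have d_pos: "0 < d i" for i
    unfolding d_def by (rule prod_pos) (auto simp: nbrs_def pos)
  have F': "Funif (T' i) = Funif (T i) powr a" if "i < n" for i
    using that equilibrium_Funif_eq[OF T that] d_pos[of i] p[of i] a
    by (simp add: T'_def d_def min_1_powr)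
  have prod_F': "(\<Prod>j\<in>nbrs n E i. Funif (T' j)) = d i powr a" for i
    unfolding d_def prod_powr_distrib by (rule prod.cong) (auto simp: nbrs_def F')
  have "T' \<in> equilibria n E (\<lambda>i. p i powr a)"
  proof (rule equilibriaI)
    show "0 < (\<Prod>j\<in>nbrs n E i. Funif (T' j))" for i
      unfolding prod_F' using d_pos[of i] by simp
    show "T' i = ereal (p i powr a / (\<Prod>j\<in>nbrs n E i. Funif (T' j)))" if "i < n" for i
      unfolding prod_F' using that d_pos[of i] by (simp add: T'_def powr_divide)
  qed (simp_all add: T'_def)
  then show thesis using F' by (rule that)
qed

lemma worst_rev_le_revenue: "T \<in> equilibria n E p \<Longrightarrow> worst_rev n E p \<le> ereal (revenue n p T)"
  unfolding worst_rev_def by (rule INF_lower)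

lemma revenue_nonneg: "T \<in> equilibria n E p \<Longrightarrow> (\<And>i. 0 \<le> p i) \<Longrightarrow> 0 \<le> revenue n p T"
  unfolding revenue_def by (intro sum_nonneg mult_nonneg_nonneg) (simp_all add: Funif_le_1)

lemma worst_rev_nonpos_if_prices_ge_1:
  assumes "\<And>i. 1 \<le> p i"
  shows "worst_rev n E p \<le> 0"
proof -
  define T where "T i = (if i < n then ereal (p i) else 0)" for i
  have F: "Funif (T i) = 1" if "i < n" for i
    using that assms[of i] by (simp add: T_def)
  have prod_F: "(\<Prod>j\<in>nbrs n E i. Funif (T j)) = 1" for i
    by (rule prod.neutral) (auto simp: nbrs_def F)
  have "T \<in> equilibria n E p"
  proof (rule equilibriaI)
    show "0 < (\<Prod>j\<in>nbrs n E i. Funif (T j))" for i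
      unfolding prod_F by simp
    show "T i = ereal (p i / (\<Prod>j\<in>nbrs n E i. Funif (T j)))" if "i < n" for i
      unfolding prod_F using that by (simp add: T_def)
  qed (simp_all add: T_def order_trans[OF _ assms])
  moreover have "revenue n p T = 0"
    unfolding revenue_def by (simp add: F)
  ultimately show ?thesis
    using worst_rev_le_revenue by (metis zero_ereal_def)
qed

lemma worst_rev_le_half_price_revenue:
  assumes T: "T \<in> equilibria n E (\<lambda>_. 1/2)" and "0 < p"
  shows "worst_rev n E (\<lambda>_. p) \<le> ereal (4 / exp 1 * revenue n (\<lambda>_. 1/2) T)"
proof (cases "p < 1")
  case True
  define a where "a = log 2 (1 / p)"
  have x: "1/2 \<le> Funif (T i)" "Funif (T i) \<le> 1" if "i < n" for i
    using equilibrium_Funif_ge[OF T that] by (simp_all add: Funif_le_1)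
  have "0 < a" using \<open>0 < p\<close> True by (simp add: a_def)
  have half_powr: "(1/2) powr a = p"
    using half_powr_log_inverse[OF \<open>0 < p\<close>] by (simp add: a_def)
  have pos: "0 < Funif (T j)" if "j < n" for j
    using x(1)[OF that] by simp
  have "0 \<le> (1/2 :: real)" by simp
  then obtain T' where T': "T' \<in> equilibria n E (\<lambda>_. (1/2) powr a)"
    and F': "\<And>i. i < n \<Longrightarrow> Funif (T' i) = Funif (T i) powr a"
    using equilibrium_powr[OF T _ pos \<open>0 < a\<close>] by blast
  have "revenue n (\<lambda>_. p) T' = (\<Sum>i<n. p * (1 - Funif (T i) powr a))"
    unfolding revenue_def by (intro sum.cong) (simp_all add: F')
  also have "\<dots> \<le> (\<Sum>i<n. 4 / exp 1 * (1/2 * (1 - Funif (T i))))"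
  proof (rule sum_mono)
    fix i assume "i \<in> {..<n}"
    then show "p * (1 - Funif (T i) powr a) \<le> 4 / exp 1 * (1/2 * (1 - Funif (T i)))"
      unfolding a_def using x by (intro powr_log_loss_le[OF \<open>0 < p\<close> True]) simp_all
  qed
  also have "\<dots> = 4 / exp 1 * revenue n (\<lambda>_. 1/2) T"
    by (simp add: revenue_def sum_distrib_left)
  finally have "revenue n (\<lambda>_. p) T' \<le> 4 / exp 1 * revenue n (\<lambda>_. 1/2) T" .
  moreover have "worst_rev n E (\<lambda>_. p) \<le> ereal (revenue n (\<lambda>_. p) T')"
    using worst_rev_le_revenue T' unfolding half_powr .
  ultimately show ?thesis
    by (meson ereal_less_eq(3) order_trans)
next
  case False
  have "worst_rev n E (\<lambda>_. p) \<le> 0"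
    using False by (intro worst_rev_nonpos_if_prices_ge_1) simp
  also have "0 \<le> ereal (4 / exp 1 * revenue n (\<lambda>_. 1/2) T)"
    using revenue_nonneg[OF T] by simp
  finally show ?thesis .
qed

theorem theorem4p6:
  fixes n :: nat and E :: "nat \<Rightarrow> nat \<Rightarrow> bool"
  assumes "\<And>i j. E i j \<Longrightarrow> E j i"
    and "\<And>i. \<not> E i i"
  shows "worst_rev n E (\<lambda>_. 1/2) \<ge>
           ereal (exp 1 / 4) * (SUP p\<in>{p::real. p > 0}. worst_rev n E (\<lambda>_. p))"
  unfolding worst_rev_def[of n E "\<lambda>_. 1/2"]
proof (rule INF_greatest)
  fix T assume T: "T \<in> equilibria n E (\<lambda>_. 1/2)"
  define r where "r = revenue n (\<lambda>_. 1/2) T"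
  have "(SUP p\<in>{p::real. p > 0}. worst_rev n E (\<lambda>_. p)) \<le> ereal (4 / exp 1 * r)"
    using worst_rev_le_half_price_revenue[OF T] by (auto simp: r_def intro: SUP_least)
  then have "ereal (exp 1 / 4) * (SUP p\<in>{p::real. p > 0}. worst_rev n E (\<lambda>_. p))
             \<le> ereal (exp 1 / 4) * ereal (4 / exp 1 * r)"
    by (rule ereal_mult_left_mono) simp
  also have "\<dots> = ereal r" by simp
  finally show "ereal (exp 1 / 4) * (SUP p\<in>{p::real. p > 0}. worst_rev n E (\<lambda>_. p))
                \<le> ereal (revenue n (\<lambda>_. 1/2) T)"
    by (simp add: r_def)
qed

end
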